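(* Let $\mathcal{D}$ be a complex vector space and let $\mathfrak{t},\mathfrak{w}$ be sesquilinear forms on $\mathcal{D}$ such that $\mathfrak{w}\geq 0$ and $M_l(\mathfrak{t})\neq\varnothing$. Then $\mathfrak{t}=\mathfrak{t}_{lr}+\mathfrak{t}_{ls}$, where $\mathfrak{t}_{lr}$ is a $\mathfrak{w}$-left regular sesquilinear form on $\mathcal{D}$ and $\mathfrak{t}_{ls}$ is a $\mathfrak{w}$-left strongly singular sesquilinear form on $\mathcal{D}$.
   Context: A sesquilinear form on $\mathcal{D}$ is a map $\mathfrak{t}:\mathcal{D}\times\mathcal{D}\to\mathbb{C}$, linear in the first and anti-linear in the second variable; write $\mathfrak{t}[f]=\mathfrak{t}(f,f)$. It is non-negative ($\mathfrak{t}\geq0$) if $\mathfrak{t}[f]\geq 0$ for all $f$. For non-negative forms $\mathfrak{u},\mathfrak{w}$ on $\mathcal{D}$: $\mathfrak{u}$ is $\mathfrak{w}$-absolutely continuous if whenever $\{f_n\}\subset\mathcal{D}$ satisfies $\mathfrak{w}[f_n]\to0$ and $\mathfrak{u}[f_n-f_m]\to0$ (as $n,m\to\infty$), then $\mathfrak{u}[f_n]\to0$; $\mathfrak{u}$ is $\mathfrak{w}$-singular if for every $f\in\mathcal{D}$ there is $\{f_n\}\subset\mathcal{D}$ with $\mathfrak{w}[f_n]\to0$ and $\mathfrak{u}[f-f_n]\to0$. For a sesquilinear form $\mathfrak{t}$, $M_l(\mathfrak{t})$ denotes the set of non-negative forms $\mathfrak{s}_1$ on $\mathcal{D}$ for which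 there exists a non-negative form $\mathfrak{s}_2$ on $\mathcal{D}$ with $|\mathfrak{t}(f,g)|\leq \mathfrak{s}_1[f]^{1/2}\mathfrak{s}_2[g]^{1/2}$ for all $f,g\in\mathcal{D}$. $\mathfrak{t}$ is $\mathfrak{w}$-left regular if some $\mathfrak{s}_1\in M_l(\mathfrak{t})$ is $\mathfrak{w}$-absolutely continuous, and $\mathfrak{w}$-left strongly singular if some $\mathfrak{s}_1\in M_l(\mathfrak{t})$ is $\mathfrak{w}$-singular. *)

theory Defs
  imports "HOL-Analysis.Analysis"
begin

text \<open>The domain D is the whole of a complex vector space: carrier type 'v with
  scalar multiplication smul, assumed to satisfy vector_space smul.\<close>

definition sesquilinear :: "(complex \<Rightarrow> 'v::ab_group_add \<Rightarrow> 'v) \<Rightarrow> ('v \<Rightarrow> 'v \<Rightarrow> complex) \<Rightarrow> bool" where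
  "sesquilinear smul t \<longleftrightarrow>
     (\<forall>f g h. t (f + g) h = t f h + t g h) \<and>
     (\<forall>(a::complex) f h. t (smul a f) h = a * t f h) \<and>
     (\<forall>f g h. t f (g + h) = t f g + t f h) \<and>
     (\<forall>(a::complex) f h. t f (smul a h) = cnj a * t f h)"

definition qf :: "('v \<Rightarrow> 'v \<Rightarrow> complex) \<Rightarrow> 'v \<Rightarrow> complex" where
  "qf t f = t f f"

definition nonneg_form :: "(complex \<Rightarrow> 'v::ab_group_add \<Rightarrow> 'v) \<Rightarrow> ('v \<Rightarrow> 'v \<Rightarrow> complex) \<Rightarrow> bool" where
  "nonneg_form smul t \<longleftrightarrow> sesquilinear smul t \<and> (\<forall>f. Im (qf t f) = 0 \<and> Re (qf t f) \<ge> 0)"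

definition abs_cont :: "('v::ab_group_add \<Rightarrow> 'v \<Rightarrow> complex) \<Rightarrow> ('v \<Rightarrow> 'v \<Rightarrow> complex) \<Rightarrow> bool" where
  "abs_cont u w \<longleftrightarrow>
     (\<forall>fs :: nat \<Rightarrow> 'v.
        ((\<lambda>n. qf w (fs n)) \<longlonglongrightarrow> 0) \<and>
        (\<forall>e>0. \<exists>N. \<forall>n\<ge>N. \<forall>m\<ge>N. cmod (qf u (fs n - fs m)) < e)
        \<longrightarrow> ((\<lambda>n. qf u (fs n)) \<longlonglongrightarrow> 0))"

definition singular_form :: "('v::ab_group_add \<Rightarrow> 'v \<Rightarrow> complex) \<Rightarrow> ('v \<Rightarrow> 'v \<Rightarrow> complex) \<Rightarrow> bool" where
  "singular_form u w \<longleftrightarrow>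
     (\<forall>f. \<exists>fs :: nat \<Rightarrow> 'v.
        ((\<lambda>n. qf w (fs n)) \<longlonglongrightarrow> 0) \<and> ((\<lambda>n. qf u (f - fs n)) \<longlonglongrightarrow> 0))"

definition M_l :: "(complex \<Rightarrow> 'v::ab_group_add \<Rightarrow> 'v) \<Rightarrow> ('v \<Rightarrow> 'v \<Rightarrow> complex) \<Rightarrow> ('v \<Rightarrow> 'v \<Rightarrow> complex) set" where
  "M_l smul t = {s1. nonneg_form smul s1 \<and> (\<exists>s2. nonneg_form smul s2 \<and>
      (\<forall>f g. cmod (t f g) \<le> sqrt (Re (qf s1 f)) * sqrt (Re (qf s2 g))))}"

definition left_regular :: "(complex \<Rightarrow> 'v::ab_group_add \<Rightarrow> 'v) \<Rightarrow> ('v \<Rightarrow> 'v \<Rightarrow> complex) \<Rightarrow> ('v \<Rightarrow> 'v \<Rightarrow> complex) \<Rightarrow> bool" where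
  "left_regular smul t w \<longleftrightarrow> (\<exists>s1\<in>M_l smul t. abs_cont s1 w)"

definition left_strongly_singular :: "(complex \<Rightarrow> 'v::ab_group_add \<Rightarrow> 'v) \<Rightarrow> ('v \<Rightarrow> 'v \<Rightarrow> complex) \<Rightarrow> ('v \<Rightarrow> 'v \<Rightarrow> complex) \<Rightarrow> bool" where
  "left_strongly_singular smul t w \<longleftrightarrow> (\<exists>s1\<in>M_l smul t. singular_form s1 w)"

end

(*
  Fix s in M_l(t) together with its partner s'.  For a vector f let d(f) be the limit, as
  delta -> 0, of inf { s[f - h] : w[h] < delta }: the squared s-distance from f to the
  vectors of arbitrarily small w-size (in the completion of the domain with respect to s,
  the distance to the closure of the w-null vectors).  Pick near-minimizers h_k(f) with w[h_k(f)] -> 0 and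
  s[f - h_k(f)] -> d(f).  Perturbing h_k(f) by small multiples of a w-null, s-bounded
  sequence u gives the variational inequality s(f - h_k(f), u_k) -> 0.  It forces h_k(f) to be
  s-Cauchy and asymptotically linear in f, so that

    s_sing(f,g) = lim s(h_k f, h_k g),      s_reg(f,g) = lim s(f - h_k f, g - h_k g),
    t_ls(f,g)   = lim t(h_k f, g),          t_lr(f,g)  = lim t(f - h_k f, g)

  exist and are sesquilinear, t = t_lr + t_ls, and s_sing, s_reg lie in M_l(t_ls), M_l(t_lr)
  with the same partner s'.  Since s_sing[f - h_m f] -> 0 while w[h_m f] -> 0, s_sing is
  w-singular; since s_reg[f] = d(f) and f - h_k f is orthogonal to w-null sequences, s_reg is
  w-absolutely continuous.
*)

theory Submission
  imports Defs
begin

section \<open>Nonnegative sesquilinear forms\<close>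

definition quad :: "('v \<Rightarrow> 'v \<Rightarrow> complex) \<Rightarrow> 'v \<Rightarrow> real" where
  "quad q x = Re (qf q x)"

definition snorm :: "('v \<Rightarrow> 'v \<Rightarrow> complex) \<Rightarrow> 'v \<Rightarrow> real" where
  "snorm q x = sqrt (quad q x)"

definition form_bounded ::
    "('v \<Rightarrow> 'v \<Rightarrow> complex) \<Rightarrow> ('v \<Rightarrow> 'v \<Rightarrow> complex) \<Rightarrow> ('v \<Rightarrow> 'v \<Rightarrow> complex) \<Rightarrow> bool" where
  "form_bounded p p' t \<longleftrightarrow> (\<forall>f g. cmod (t f g) \<le> snorm p f * snorm p' g)"

lemma M_l_iff:
  "s \<in> M_l smul t \<longleftrightarrow> nonneg_form smul s \<and> (\<exists>s'. nonneg_form smul s' \<and> form_bounded s s' t)"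
  by (simp add: M_l_def form_bounded_def snorm_def quad_def)

lemma sesquilinear_simps:
  assumes "sesquilinear smul t"
  shows "t (f + g) h = t f h + t g h" "t (smul a f) h = a * t f h"
    "t f (g + h) = t f g + t f h" "t f (smul a h) = cnj a * t f h"
    "t 0 h = 0" "t f 0 = 0" "t (- f) h = - t f h" "t f (- h) = - t f h"
    "t (f - g) h = t f h - t g h" "t f (g - h) = t f g - t f h"
proof -
  show add_left: "\<And>f g h. t (f + g) h = t f h + t g h"
    and "t (smul a f) h = a * t f h"
    and add_right: "\<And>f g h. t f (g + h) = t f g + t f h"
    and "t f (smul a h) = cnj a * t f h"
    using assms unfolding sesquilinear_def by blast+
  show zero_left: "\<And>h. t 0 h = 0" using add_left[of 0 0] by simp
  show zero_right: "\<And>f. t f 0 = 0" using add_right[of _ 0 0] by simp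
  show minus_left: "\<And>f h. t (- f) h = - t f h"
    using add_left[of _ "- _"] zero_left by (metis add.right_inverse add_eq_0_iff)
  show minus_right: "\<And>f h. t f (- h) = - t f h"
    using add_right[of _ _ "- _"] zero_right by (metis add.right_inverse add_eq_0_iff)
  show "t (f - g) h = t f h - t g h" using add_left[of f "- g"] minus_left by simp
  show "t f (g - h) = t f g - t f h" using add_right[of f g "- h"] minus_right by simp
qed

lemma nonneg_form_sesquilinear: "nonneg_form smul q \<Longrightarrow> sesquilinear smul q"
  by (simp add: nonneg_form_def)

lemma nonneg_form_diag:
  assumes "nonneg_form smul q"
  shows "q x x = complex_of_real (quad q x)"
  using assms by (simp add: nonneg_form_def qf_def quad_def complex_eq_iff)

lemma quad_nonneg: "nonneg_form smul q \<Longrightarrow> quad q x \<ge> 0"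
  by (simp add: nonneg_form_def quad_def)

lemma nonneg_form_hermitian:
  assumes q: "nonneg_form smul q"
  shows "q g f = cnj (q f g)"
proof -
  note simps = sesquilinear_simps[OF nonneg_form_sesquilinear[OF q]]
  have im: "Im (q x x) = 0" for x
    by (simp add: nonneg_form_diag[OF q])
  have "Im (q f g) + Im (q g f) = 0"
    using im[of "f + g"] im[of f] im[of g] by (simp add: simps)
  moreover have "Re (q g f) = Re (q f g)"
    using im[of "f + smul \<i> g"] im[of f] im[of g] by (simp add: simps algebra_simps)
  ultimately show ?thesis
    by (simp add: complex_eq_iff)
qed

lemma quad_add:
  assumes q: "nonneg_form smul q"
  shows "quad q (x + y) = quad q x + 2 * Re (q x y) + quad q y"
proof -
  have "q (x + y) (x + y) = q x x + q x y + q y x + q y y"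
    by (simp add: sesquilinear_simps[OF nonneg_form_sesquilinear[OF q]])
  moreover have "Re (q y x) = Re (q x y)" using nonneg_form_hermitian[OF q, of y x] by simp
  ultimately show ?thesis by (simp add: quad_def qf_def)
qed

lemma quad_scale:
  assumes q: "nonneg_form smul q"
  shows "quad q (smul a x) = (cmod a)\<^sup>2 * quad q x"
proof -
  have "q (smul a x) (smul a x) = (a * cnj a) * q x x"
    by (simp add: sesquilinear_simps[OF nonneg_form_sesquilinear[OF q]])
  also have "a * cnj a = complex_of_real ((cmod a)\<^sup>2)" by (rule complex_norm_square[symmetric])
  finally show ?thesis by (simp add: quad_def qf_def)
qed

lemma quad_minus: "nonneg_form smul q \<Longrightarrow> quad q (- x) = quad q x"
  by (simp add: quad_def qf_def sesquilinear_simps[OF nonneg_form_sesquilinear])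

lemma quad_zero: "nonneg_form smul q \<Longrightarrow> quad q 0 = 0"
  by (simp add: quad_def qf_def sesquilinear_simps[OF nonneg_form_sesquilinear])

lemma cnj_sgn_mult: "cnj (sgn z) * z = complex_of_real (cmod z)"
proof (cases "z = 0")
  case False
  have "cnj (sgn z) * z = (cnj z * z) / complex_of_real (cmod z)"
    by (simp add: sgn_div_norm scaleR_conv_of_real field_simps)
  also have "cnj z * z = complex_of_real ((cmod z)\<^sup>2)"
    by (metis complex_norm_square mult.commute)
  finally show ?thesis using False by (simp add: power2_eq_square)
qed simp

text \<open>Rotating \<open>y\<close> by \<open>sgn (q x y)\<close> makes the cross term real, equal to \<open>-2\<tau>|q x y|\<close>.\<close>

lemma quad_diff_sgn_scale:
  assumes q: "nonneg_form smul q" and "\<tau> \<ge> 0"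
  shows "quad q (x - smul (complex_of_real \<tau> * sgn (q x y)) y)
           \<le> quad q x - 2 * \<tau> * cmod (q x y) + \<tau>\<^sup>2 * quad q y"
proof -
  define \<alpha> where "\<alpha> = complex_of_real \<tau> * sgn (q x y)"
  have "quad q (x - smul \<alpha> y) = quad q x - 2 * Re (cnj \<alpha> * q x y) + quad q (smul \<alpha> y)"
    using quad_add[OF q, of x "- smul \<alpha> y"] quad_minus[OF q, of "smul \<alpha> y"]
    by (simp add: sesquilinear_simps[OF nonneg_form_sesquilinear[OF q]])
  also have "cnj \<alpha> * q x y = complex_of_real (\<tau> * cmod (q x y))"
    using cnj_sgn_mult[of "q x y"] by (simp add: \<alpha>_def)
  also have "quad q (smul \<alpha> y) \<le> \<tau>\<^sup>2 * quad q y"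
    unfolding quad_scale[OF q] using assms quad_nonneg[OF q, of y]
    by (intro mult_right_mono) (auto simp: \<alpha>_def norm_mult norm_sgn power_mono)
  finally show ?thesis by (simp add: \<alpha>_def)
qed

lemma cross_term_small:
  assumes q: "nonneg_form smul q" and "\<tau> > 0" and "quad q y \<le> B"
    and "quad q x < m + \<eta>"
    and "m - \<eta> < quad q (x - smul (complex_of_real \<tau> * sgn (q x y)) y)"
  shows "cmod (q x y) < \<eta> / \<tau> + \<tau> * B / 2"
proof -
  have "m - \<eta> < quad q x - 2 * \<tau> * cmod (q x y) + \<tau>\<^sup>2 * quad q y"
    using assms(5) quad_diff_sgn_scale[OF q, of \<tau> x y] \<open>\<tau> > 0\<close> by simp
  moreover have "\<tau>\<^sup>2 * quad q y \<le> \<tau>\<^sup>2 * B"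
    using assms(3) by (simp add: mult_left_mono)
  ultimately have "2 * \<tau> * cmod (q x y) < 2 * \<eta> + \<tau>\<^sup>2 * B"
    using assms(4) by linarith
  moreover have "2 * \<eta> + \<tau>\<^sup>2 * B = \<tau> * (2 * (\<eta> / \<tau>) + \<tau> * B)"
    using \<open>\<tau> > 0\<close> by (simp add: power2_eq_square algebra_simps)
  ultimately have "\<tau> * (2 * cmod (q x y)) < \<tau> * (2 * (\<eta> / \<tau>) + \<tau> * B)"
    by (simp add: algebra_simps)
  then show ?thesis
    using \<open>\<tau> > 0\<close> by (simp only: mult_less_cancel_left_pos)
qed

lemma quadratic_nonneg_discriminant:
  fixes a b c :: real
  assumes "\<And>\<tau>. \<tau> \<ge> 0 \<Longrightarrow> 0 \<le> a - 2 * \<tau> * b + \<tau>\<^sup>2 * c" and "b \<ge> 0" and "c \<ge> 0"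
  shows "b\<^sup>2 \<le> a * c"
proof (cases "c = 0")
  case True
  have "b = 0"
  proof (rule ccontr)
    assume "b \<noteq> 0"
    then have "0 \<le> a - (a + 1)"
      using assms(1)[of 0] assms(1)[of "(a + 1) / (2 * b)"] assms(2) True
      by (simp add: field_simps)
    then show False by simp
  qed
  then show ?thesis using True by simp
next
  case False
  then have "c > 0" using assms(3) by simp
  have "0 \<le> a - 2 * (b / c) * b + (b / c)\<^sup>2 * c"
    using assms(1)[of "b / c"] assms(2) \<open>c > 0\<close> by simp
  also have "\<dots> = a - b\<^sup>2 / c" using \<open>c > 0\<close> by (simp add: power2_eq_square field_simps)
  finally show ?thesis using \<open>c > 0\<close> by (simp add: field_simps)
qed

lemma cauchy_schwarz_form:
  assumes q: "nonneg_form smul q"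
  shows "cmod (q x y) \<le> snorm q x * snorm q y"
proof -
  have "0 \<le> quad q x - 2 * \<tau> * cmod (q x y) + \<tau>\<^sup>2 * quad q y" if "\<tau> \<ge> 0" for \<tau>
    using quad_diff_sgn_scale[OF q that, of x y] quad_nonneg[OF q] by (meson order.trans)
  then have "(cmod (q x y))\<^sup>2 \<le> quad q x * quad q y"
    by (rule quadratic_nonneg_discriminant) (simp_all add: quad_nonneg[OF q])
  then show ?thesis
    unfolding snorm_def by (metis norm_ge_zero real_le_rsqrt real_sqrt_mult)
qed

lemma nonneg_form_bounded: "nonneg_form smul q \<Longrightarrow> form_bounded q q q"
  by (simp add: form_bounded_def cauchy_schwarz_form)

lemma snorm_nonneg: "nonneg_form smul q \<Longrightarrow> snorm q x \<ge> 0"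
  by (simp add: snorm_def quad_nonneg)

lemma snorm_square: "nonneg_form smul q \<Longrightarrow> (snorm q x)\<^sup>2 = quad q x"
  by (simp add: snorm_def quad_nonneg)

lemma snorm_triangle:
  assumes q: "nonneg_form smul q"
  shows "snorm q (x + y) \<le> snorm q x + snorm q y"
proof -
  have "Re (q x y) \<le> snorm q x * snorm q y"
    using cauchy_schwarz_form[OF q, of x y] complex_Re_le_cmod[of "q x y"] by linarith
  then have "(snorm q (x + y))\<^sup>2 \<le> (snorm q x + snorm q y)\<^sup>2"
    by (simp add: snorm_square[OF q] quad_add[OF q] power2_sum)
  then show ?thesis using snorm_nonneg[OF q] by (meson add_nonneg_nonneg power2_le_imp_le)
qed

lemma snorm_minus: "nonneg_form smul q \<Longrightarrow> snorm q (- x) = snorm q x"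
  by (simp add: snorm_def quad_minus)

lemma snorm_reverse_triangle:
  assumes q: "nonneg_form smul q"
  shows "\<bar>snorm q x - snorm q y\<bar> \<le> snorm q (x - y)"
  using snorm_triangle[OF q, of "x - y" y] snorm_triangle[OF q, of "y - x" x]
    snorm_minus[OF q, of "x - y"] by (simp add: abs_le_iff)

lemma quad_add_le:
  assumes q: "nonneg_form smul q"
  shows "quad q (x + y) \<le> 2 * quad q x + 2 * quad q y"
proof -
  have "(snorm q (x + y))\<^sup>2 \<le> (snorm q x + snorm q y)\<^sup>2"
    by (intro power_mono snorm_triangle[OF q] snorm_nonneg[OF q])
  also have "\<dots> \<le> 2 * (snorm q x)\<^sup>2 + 2 * (snorm q y)\<^sup>2"
    using zero_le_power2[of "snorm q x - snorm q y"] by (simp add: power2_sum power2_diff)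
  finally show ?thesis by (simp add: snorm_square[OF q])
qed

lemma quad_diff_le:
  assumes q: "nonneg_form smul q"
  shows "quad q (x - y) \<le> 2 * quad q x + 2 * quad q y"
  using quad_add_le[OF q, of x "- y"] quad_minus[OF q, of y] by simp

lemma tendsto_quad_zero_add:
  assumes q: "nonneg_form smul q"
    and "((\<lambda>i. quad q (a i)) \<longlongrightarrow> 0) F" "((\<lambda>i. quad q (b i)) \<longlongrightarrow> 0) F"
  shows "((\<lambda>i. quad q (a i + b i)) \<longlongrightarrow> 0) F"
proof (rule tendsto_sandwich[where f="\<lambda>_. 0" and h="\<lambda>i. 2 * quad q (a i) + 2 * quad q (b i)"])
  show "((\<lambda>i. 2 * quad q (a i) + 2 * quad q (b i)) \<longlongrightarrow> 0) F"
    using tendsto_add[OF tendsto_mult_right_zero tendsto_mult_right_zero, OF assms(2,3)] by simp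
qed (simp_all add: quad_nonneg[OF q] quad_add_le[OF q])

lemma tendsto_quad_zero_diff:
  assumes q: "nonneg_form smul q"
    and "((\<lambda>i. quad q (a i)) \<longlongrightarrow> 0) F" "((\<lambda>i. quad q (b i)) \<longlongrightarrow> 0) F"
  shows "((\<lambda>i. quad q (a i - b i)) \<longlongrightarrow> 0) F"
  using tendsto_quad_zero_add[OF q assms(2), of "\<lambda>i. - b i"] assms(3) by (simp add: quad_minus[OF q])

lemma tendsto_quad_zero_scale:
  assumes q: "nonneg_form smul q" and "((\<lambda>i. quad q (a i)) \<longlongrightarrow> 0) F"
  shows "((\<lambda>i. quad q (smul c (a i))) \<longlongrightarrow> 0) F"
  using tendsto_mult_right_zero[OF assms(2)] by (simp add: quad_scale[OF q])

lemma tendsto_quad_zero_iff: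
  assumes q: "nonneg_form smul q"
  shows "((\<lambda>i. quad q (a i)) \<longlongrightarrow> 0) F \<longleftrightarrow> ((\<lambda>i. q (a i) (a i)) \<longlongrightarrow> 0) F"
  using tendsto_of_real_iff[where 'a=complex and f="\<lambda>i. quad q (a i)" and c=0]
  by (simp add: nonneg_form_diag[OF q])

lemma quad_le_split:
  assumes q: "nonneg_form smul q"
  shows "quad q f \<le> snorm q f * snorm q (f - g) + cmod (q f g)"
proof -
  have "quad q f = Re (q f (f - g)) + Re (q f g)"
    by (simp add: quad_def qf_def sesquilinear_simps[OF nonneg_form_sesquilinear[OF q]])
  then show ?thesis
    using cauchy_schwarz_form[OF q, of f "f - g"]
      complex_Re_le_cmod[of "q f (f - g)"] complex_Re_le_cmod[of "q f g"] by linarith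
qed

lemma quad_le_of_tendsto_zero:
  assumes q: "nonneg_form smul q" and "(\<lambda>m. q x (y m)) \<longlonglongrightarrow> 0"
    and "\<forall>m\<ge>N. snorm q (x - y m) \<le> \<delta>"
  shows "quad q x \<le> snorm q x * \<delta>"
proof (rule tendsto_le[OF sequentially_bot _ tendsto_const])
  show "(\<lambda>m. snorm q x * \<delta> + cmod (q x (y m))) \<longlonglongrightarrow> snorm q x * \<delta>"
    using tendsto_add[OF tendsto_const tendsto_norm_zero[OF assms(2)]] by simp
  have "quad q x \<le> snorm q x * \<delta> + cmod (q x (y m))" if "m \<ge> N" for m
    using quad_le_split[OF q, of x "y m"] assms(3) that snorm_nonneg[OF q, of x]
    by (meson add_right_mono mult_left_mono order.trans)
  then show "\<forall>\<^sub>F m in sequentially. quad q x \<le> snorm q x * \<delta> + cmod (q x (y m))"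
    unfolding eventually_sequentially by blast
qed

section \<open>Limits of asymptotically linear approximations\<close>

definition form_cauchy :: "('v::ab_group_add \<Rightarrow> 'v \<Rightarrow> complex) \<Rightarrow> (nat \<Rightarrow> 'v) \<Rightarrow> bool" where
  "form_cauchy q a \<longleftrightarrow> (\<forall>\<epsilon>>0. \<exists>M. \<forall>n\<ge>M. \<forall>m\<ge>M. quad q (a n - a m) < \<epsilon>)"

lemma form_cauchy_snorm:
  assumes q: "nonneg_form smul q" and "form_cauchy q a" and "\<epsilon> > 0"
  shows "\<exists>M. \<forall>n\<ge>M. \<forall>m\<ge>M. snorm q (a n - a m) < \<epsilon>"
proof -
  obtain M where "\<forall>n\<ge>M. \<forall>m\<ge>M. quad q (a n - a m) < \<epsilon>\<^sup>2"
    using assms(2,3) unfolding form_cauchy_def by (meson zero_less_power)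
  moreover have "snorm q x < \<epsilon>" if "quad q x < \<epsilon>\<^sup>2" for x
    using real_sqrt_less_mono[OF that] \<open>\<epsilon> > 0\<close> by (simp add: snorm_def)
  ultimately show ?thesis
    by blast
qed

lemma form_cauchy_bounded:
  assumes q: "nonneg_form smul q" and "form_cauchy q a"
  shows "\<exists>B. \<forall>n. snorm q (a n) \<le> B"
proof -
  obtain M where M: "\<forall>n\<ge>M. snorm q (a n - a M) < 1"
    using form_cauchy_snorm[OF assms] by (meson order.refl zero_less_one)
  define B where "B = Max ((\<lambda>k. snorm q (a k)) ` {..M}) + 1"
  have le_B: "snorm q (a k) \<le> B - 1" if "k \<le> M" for k
    unfolding B_def using that by (auto intro: Max_ge)
  have "snorm q (a n) \<le> B" for n
  proof (cases "n \<le> M")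
    case True
    then show ?thesis using le_B by force
  next
    case False
    have "snorm q (a n) \<le> snorm q (a n - a M) + snorm q (a M)"
      using snorm_reverse_triangle[OF q, of "a n" "a M"] by linarith
    also have "\<dots> \<le> B"
    proof -
      have "snorm q (a n - a M) < 1" using M False by simp
      then show ?thesis using le_B[of M] by simp
    qed
    finally show ?thesis .
  qed
  then show ?thesis by blast
qed

lemma form_cauchy_const: "nonneg_form smul q \<Longrightarrow> form_cauchy q (\<lambda>n. g)"
  by (simp add: form_cauchy_def quad_zero)

lemma tendsto_snorm_zero:
  "((\<lambda>i. quad q (d i)) \<longlongrightarrow> 0) F \<Longrightarrow> ((\<lambda>i. snorm q (d i)) \<longlongrightarrow> 0) F"
  unfolding snorm_def using tendsto_real_sqrt by fastforce

lemma form_bounded_tendsto_zero_left: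
  assumes "form_bounded p p' t" and "((\<lambda>i. quad p (d i)) \<longlongrightarrow> 0) F"
    and "nonneg_form smul p'" and "\<forall>i. snorm p' (b i) \<le> B"
  shows "((\<lambda>i. t (d i) (b i)) \<longlongrightarrow> 0) F"
proof (rule Lim_null_comparison)
  show "\<forall>\<^sub>F i in F. norm (t (d i) (b i)) \<le> snorm p (d i) * snorm p' (b i)"
    using assms(1) by (simp add: form_bounded_def)
  show "((\<lambda>i. snorm p (d i) * snorm p' (b i)) \<longlongrightarrow> 0) F"
    using assms(3,4) snorm_nonneg[OF assms(3)]
    by (intro lim_null_mult_right_bounded[where B=B] tendsto_snorm_zero assms(2) always_eventually)
      simp
qed

lemma form_bounded_tendsto_zero_right:
  assumes "form_bounded p p' t" and "((\<lambda>i. quad p' (d i)) \<longlongrightarrow> 0) F"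
    and "nonneg_form smul p" and "\<forall>i. snorm p (a i) \<le> B"
  shows "((\<lambda>i. t (a i) (d i)) \<longlongrightarrow> 0) F"
proof (rule Lim_null_comparison)
  show "\<forall>\<^sub>F i in F. norm (t (a i) (d i)) \<le> snorm p (a i) * snorm p' (d i)"
    using assms(1) by (simp add: form_bounded_def)
  show "((\<lambda>i. snorm p (a i) * snorm p' (d i)) \<longlongrightarrow> 0) F"
    using assms(3,4) snorm_nonneg[OF assms(3)]
    by (intro lim_null_mult_left_bounded[where B=B] tendsto_snorm_zero assms(2) always_eventually)
      simp
qed

lemma form_bounded_convergent:
  assumes p: "nonneg_form smul p" and p': "nonneg_form smul p'"
    and t: "sesquilinear smul t" and bounded: "form_bounded p p' t"
    and a: "form_cauchy p a" and b: "form_cauchy p' b"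
  shows "convergent (\<lambda>n. t (a n) (b n))"
proof -
  obtain Ba where Ba: "\<forall>n. snorm p (a n) \<le> Ba" using form_cauchy_bounded[OF p a] by blast
  obtain Bb where Bb: "\<forall>n. snorm p' (b n) \<le> Bb" using form_cauchy_bounded[OF p' b] by blast
  have "Ba \<ge> 0" "Bb \<ge> 0" using Ba Bb snorm_nonneg[OF p] snorm_nonneg[OF p'] by (meson order.trans)+
  have "Cauchy (\<lambda>n. t (a n) (b n))"
  proof (rule CauchyI)
    fix e :: real
    assume "e > 0"
    define \<delta> where "\<delta> = e / (Ba + Bb + 1)"
    have "\<delta> > 0" using \<open>e > 0\<close> \<open>Ba \<ge> 0\<close> \<open>Bb \<ge> 0\<close> by (simp add: \<delta>_def)
    obtain Ma where Ma: "\<forall>n\<ge>Ma. \<forall>m\<ge>Ma. snorm p (a n - a m) < \<delta>"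
      using form_cauchy_snorm[OF p a \<open>\<delta> > 0\<close>] by blast
    obtain Mb where Mb: "\<forall>n\<ge>Mb. \<forall>m\<ge>Mb. snorm p' (b n - b m) < \<delta>"
      using form_cauchy_snorm[OF p' b \<open>\<delta> > 0\<close>] by blast
    have "norm (t (a m) (b m) - t (a n) (b n)) < e" if "m \<ge> max Ma Mb" "n \<ge> max Ma Mb" for m n
    proof -
      have "t (a m) (b m) - t (a n) (b n) = t (a m - a n) (b m) + t (a n) (b m - b n)"
        by (simp add: sesquilinear_simps[OF t])
      then have "norm (t (a m) (b m) - t (a n) (b n))
                   \<le> snorm p (a m - a n) * snorm p' (b m) + snorm p (a n) * snorm p' (b m - b n)"
        using bounded unfolding form_bounded_def by (metis add_mono norm_triangle_le)
      also have "\<dots> \<le> \<delta> * Bb + Ba * \<delta>"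
        using Ma Mb Ba Bb that snorm_nonneg[OF p] snorm_nonneg[OF p'] \<open>Ba \<ge> 0\<close> \<open>\<delta> > 0\<close>
        by (intro add_mono mult_mono) (auto intro: less_imp_le)
      also have "\<dots> = \<delta> * (Ba + Bb + 1) - \<delta>"
        by (simp add: algebra_simps)
      also have "\<delta> * (Ba + Bb + 1) = e"
        using \<open>Ba \<ge> 0\<close> \<open>Bb \<ge> 0\<close> by (simp add: \<delta>_def)
      finally show ?thesis using \<open>\<delta> > 0\<close> by simp
    qed
    then show "\<exists>M. \<forall>m\<ge>M. \<forall>n\<ge>M. norm (t (a m) (b m) - t (a n) (b n)) < e" by blast
  qed
  then show ?thesis by (simp add: Cauchy_convergent_iff)
qed

definition asymp_linear ::
    "(complex \<Rightarrow> 'v::ab_group_add \<Rightarrow> 'v) \<Rightarrow> ('v \<Rightarrow> 'v \<Rightarrow> complex) \<Rightarrow> ('v \<Rightarrow> nat \<Rightarrow> 'v) \<Rightarrow> bool" where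
  "asymp_linear smul p A \<longleftrightarrow> (\<forall>f. form_cauchy p (A f)) \<and>
     (\<forall>f g. (\<lambda>n. quad p (A (f + g) n - (A f n + A g n))) \<longlonglongrightarrow> 0) \<and>
     (\<forall>c f. (\<lambda>n. quad p (A (smul c f) n - smul c (A f n))) \<longlonglongrightarrow> 0)"

definition limit_form ::
    "('v \<Rightarrow> 'v \<Rightarrow> complex) \<Rightarrow> ('v \<Rightarrow> nat \<Rightarrow> 'v) \<Rightarrow> ('v \<Rightarrow> nat \<Rightarrow> 'v) \<Rightarrow> 'v \<Rightarrow> 'v \<Rightarrow> complex" where
  "limit_form t A B f g = lim (\<lambda>n. t (A f n) (B g n))"

lemma asymp_linear_cauchy: "asymp_linear smul p A \<Longrightarrow> form_cauchy p (A f)"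
  by (simp add: asymp_linear_def)

lemma LIMSEQ_limit_form:
  assumes "nonneg_form smul p" "nonneg_form smul p'" "sesquilinear smul t" "form_bounded p p' t"
    and "form_cauchy p (A f)" "form_cauchy p' (B g)"
  shows "(\<lambda>n. t (A f n) (B g n)) \<longlonglongrightarrow> limit_form t A B f g"
  using form_bounded_convergent[OF assms] by (simp add: limit_form_def convergent_LIMSEQ_iff)

lemma LIMSEQ_quad_limit_form:
  assumes p: "nonneg_form smul p" and "form_cauchy p (A f)"
  shows "(\<lambda>n. quad p (A f n)) \<longlonglongrightarrow> quad (limit_form p A A) f"
  using tendsto_Re[OF LIMSEQ_limit_form[where A=A and B=A and f=f and g=f,
        OF p p nonneg_form_sesquilinear[OF p] nonneg_form_bounded[OF p] assms(2) assms(2)]]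
  by (simp add: quad_def qf_def)

locale bounded_limit_form =
  fixes smul :: "complex \<Rightarrow> 'v::ab_group_add \<Rightarrow> 'v"
    and p p' t :: "'v \<Rightarrow> 'v \<Rightarrow> complex" and A B :: "'v \<Rightarrow> nat \<Rightarrow> 'v"
  assumes p: "nonneg_form smul p" and p': "nonneg_form smul p'"
    and t: "sesquilinear smul t" and bounded: "form_bounded p p' t"
    and A: "asymp_linear smul p A" and B: "asymp_linear smul p' B"
begin

lemma limit_form_tendsto: "(\<lambda>n. t (A f n) (B g n)) \<longlonglongrightarrow> limit_form t A B f g"
  using LIMSEQ_limit_form[OF p p' t bounded] A B by (simp add: asymp_linear_cauchy)

lemma limit_form_eqI: "(\<lambda>n. t (A f n) (B g n)) \<longlonglongrightarrow> L \<Longrightarrow> limit_form t A B f g = L"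
  unfolding limit_form_def by (rule limI)

lemma null_perturbation_left:
  assumes "(\<lambda>n. quad p (d n)) \<longlonglongrightarrow> 0"
  shows "(\<lambda>n. t (d n) (B g n)) \<longlonglongrightarrow> 0"
proof -
  obtain C where "\<forall>n. snorm p' (B g n) \<le> C"
    using form_cauchy_bounded[OF p' asymp_linear_cauchy[OF B]] by blast
  then show ?thesis by (rule form_bounded_tendsto_zero_left[OF bounded assms p'])
qed

lemma null_perturbation_right:
  assumes "(\<lambda>n. quad p' (d n)) \<longlonglongrightarrow> 0"
  shows "(\<lambda>n. t (A f n) (d n)) \<longlonglongrightarrow> 0"
proof -
  obtain C where "\<forall>n. snorm p (A f n) \<le> C"
    using form_cauchy_bounded[OF p asymp_linear_cauchy[OF A]] by blast
  then show ?thesis by (rule form_bounded_tendsto_zero_right[OF bounded assms p])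
qed

lemma limit_form_add_left: "limit_form t A B (f + f') g = limit_form t A B f g + limit_form t A B f' g"
proof (rule limit_form_eqI)
  define d where "d n = A (f + f') n - (A f n + A f' n)" for n
  have "t (A (f + f') n) (B g n) = t (A f n) (B g n) + t (A f' n) (B g n) + t (d n) (B g n)" for n
    by (simp add: d_def sesquilinear_simps[OF t])
  moreover have "(\<lambda>n. t (d n) (B g n)) \<longlonglongrightarrow> 0"
    using A by (intro null_perturbation_left) (simp add: asymp_linear_def d_def)
  ultimately show "(\<lambda>n. t (A (f + f') n) (B g n)) \<longlonglongrightarrow> limit_form t A B f g + limit_form t A B f' g"
    using tendsto_add[OF tendsto_add[OF limit_form_tendsto limit_form_tendsto]] by fastforce
qed

lemma limit_form_scale_left: "limit_form t A B (smul c f) g = c * limit_form t A B f g"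
proof (rule limit_form_eqI)
  define d where "d n = A (smul c f) n - smul c (A f n)" for n
  have "t (A (smul c f) n) (B g n) = c * t (A f n) (B g n) + t (d n) (B g n)" for n
    by (simp add: d_def sesquilinear_simps[OF t])
  moreover have "(\<lambda>n. t (d n) (B g n)) \<longlonglongrightarrow> 0"
    using A by (intro null_perturbation_left) (simp add: asymp_linear_def d_def)
  ultimately show "(\<lambda>n. t (A (smul c f) n) (B g n)) \<longlonglongrightarrow> c * limit_form t A B f g"
    using tendsto_add[OF tendsto_mult_left[OF limit_form_tendsto]] by fastforce
qed

lemma limit_form_add_right: "limit_form t A B f (g + g') = limit_form t A B f g + limit_form t A B f g'"
proof (rule limit_form_eqI)
  define d where "d n = B (g + g') n - (B g n + B g' n)" for n
  have "t (A f n) (B (g + g') n) = t (A f n) (B g n) + t (A f n) (B g' n) + t (A f n) (d n)" for n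
    by (simp add: d_def sesquilinear_simps[OF t])
  moreover have "(\<lambda>n. t (A f n) (d n)) \<longlonglongrightarrow> 0"
    using B by (intro null_perturbation_right) (simp add: asymp_linear_def d_def)
  ultimately show "(\<lambda>n. t (A f n) (B (g + g') n)) \<longlonglongrightarrow> limit_form t A B f g + limit_form t A B f g'"
    using tendsto_add[OF tendsto_add[OF limit_form_tendsto limit_form_tendsto]] by fastforce
qed

lemma limit_form_scale_right: "limit_form t A B f (smul c g) = cnj c * limit_form t A B f g"
proof (rule limit_form_eqI)
  define d where "d n = B (smul c g) n - smul c (B g n)" for n
  have "t (A f n) (B (smul c g) n) = cnj c * t (A f n) (B g n) + t (A f n) (d n)" for n
    by (simp add: d_def sesquilinear_simps[OF t])
  moreover have "(\<lambda>n. t (A f n) (d n)) \<longlonglongrightarrow> 0"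
    using B by (intro null_perturbation_right) (simp add: asymp_linear_def d_def)
  ultimately show "(\<lambda>n. t (A f n) (B (smul c g) n)) \<longlonglongrightarrow> cnj c * limit_form t A B f g"
    using tendsto_add[OF tendsto_mult_left[OF limit_form_tendsto]] by fastforce
qed

lemma limit_form_sesquilinear: "sesquilinear smul (limit_form t A B)"
  unfolding sesquilinear_def
  using limit_form_add_left limit_form_scale_left limit_form_add_right limit_form_scale_right
  by blast

lemma limit_form_bounded: "form_bounded (limit_form p A A) (limit_form p' B B) (limit_form t A B)"
  unfolding form_bounded_def
proof (intro allI)
  fix f g
  have "(\<lambda>n. snorm p (A f n) * snorm p' (B g n))
          \<longlonglongrightarrow> snorm (limit_form p A A) f * snorm (limit_form p' B B) g"
    unfolding snorm_def using p p' A B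
    by (intro tendsto_mult tendsto_real_sqrt LIMSEQ_quad_limit_form) (auto simp: asymp_linear_cauchy)
  moreover have "norm (t (A f n) (B g n)) \<le> snorm p (A f n) * snorm p' (B g n)" for n
    using bounded by (simp add: form_bounded_def)
  ultimately show "cmod (limit_form t A B f g) \<le> snorm (limit_form p A A) f * snorm (limit_form p' B B) g"
    by (intro tendsto_le[OF _ _ tendsto_norm[OF limit_form_tendsto]]) auto
qed

end

lemma limit_form_nonneg:
  assumes p: "nonneg_form smul p" and A: "asymp_linear smul p A"
  shows "nonneg_form smul (limit_form p A A)"
proof -
  interpret bounded_limit_form smul p p p A A
    using p A by unfold_locales (simp_all add: nonneg_form_sesquilinear nonneg_form_bounded)
  have "(\<lambda>n. p (A f n) (A f n)) \<longlonglongrightarrow> complex_of_real (quad (limit_form p A A) f)" for f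
    using tendsto_of_real[OF LIMSEQ_quad_limit_form[where A=A, OF p asymp_linear_cauchy[OF A]]]
    by (simp add: nonneg_form_diag[OF p])
  then have "limit_form p A A f f = complex_of_real (quad (limit_form p A A) f)" for f
    by (rule limit_form_eqI)
  moreover have "quad (limit_form p A A) f \<ge> 0" for f
    using LIMSEQ_quad_limit_form[where A=A and f=f, OF p asymp_linear_cauchy[OF A]]
    by (rule LIMSEQ_le_const) (simp add: quad_nonneg[OF p])
  ultimately show ?thesis
    using limit_form_sesquilinear by (simp add: nonneg_form_def qf_def)
qed

lemma LIMSEQ_quad_limit_form_diff:
  assumes p: "nonneg_form smul p" and A: "asymp_linear smul p A"
  shows "(\<lambda>n. quad p (A f n - A g n)) \<longlonglongrightarrow> quad (limit_form p A A) (f - g)"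
proof -
  have "(\<lambda>n. snorm p (A (f - g) n)) \<longlonglongrightarrow> snorm (limit_form p A A) (f - g)"
    unfolding snorm_def
    by (intro tendsto_real_sqrt LIMSEQ_quad_limit_form[OF p] asymp_linear_cauchy[OF A])
  moreover have "(\<lambda>n. snorm p (A f n - A g n) - snorm p (A (f - g) n)) \<longlonglongrightarrow> 0"
  proof (rule Lim_null_comparison)
    have "A f n - A g n - A (f - g) n = A ((f - g) + g) n - (A (f - g) n + A g n)" for n
      by (simp add: algebra_simps)
    then show "\<forall>\<^sub>F n in sequentially. norm (snorm p (A f n - A g n) - snorm p (A (f - g) n))
                 \<le> snorm p (A ((f - g) + g) n - (A (f - g) n + A g n))"
      using snorm_reverse_triangle[OF p] by (intro always_eventually allI) (metis real_norm_def)
    have "(\<lambda>n. quad p (A ((f - g) + g) n - (A (f - g) n + A g n))) \<longlonglongrightarrow> 0"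
      using A unfolding asymp_linear_def by blast
    then show "(\<lambda>n. snorm p (A ((f - g) + g) n - (A (f - g) n + A g n))) \<longlonglongrightarrow> 0"
      by (rule tendsto_snorm_zero)
  qed
  ultimately have "(\<lambda>n. snorm p (A f n - A g n)) \<longlonglongrightarrow> snorm (limit_form p A A) (f - g)"
    using tendsto_add by fastforce
  from tendsto_power[OF this, of 2] show ?thesis
    using limit_form_nonneg[OF p A] by (simp add: snorm_square[OF p] snorm_square)
qed

lemma asymp_linear_const: "nonneg_form smul p \<Longrightarrow> asymp_linear smul p (\<lambda>f n. f)"
  by (simp add: asymp_linear_def form_cauchy_const quad_zero)

lemma asymp_linear_complement:
  assumes "vector_space smul" and p: "nonneg_form smul p" and A: "asymp_linear smul p A"
  shows "asymp_linear smul p (\<lambda>f n. f - A f n)"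
proof -
  interpret vector_space smul by fact
  have "(f - A f n) - (f - A f m) = - (A f n - A f m)"
    and "(f + g - A (f + g) n) - ((f - A f n) + (g - A g n)) = - (A (f + g) n - (A f n + A g n))"
    and "(smul c f - A (smul c f) n) - smul c (f - A f n) = - (A (smul c f) n - smul c (A f n))"
    for f g c n m
    by (simp_all add: algebra_simps)
  then have "quad p ((f - A f n) - (f - A f m)) = quad p (A f n - A f m)"
    and "quad p ((f + g - A (f + g) n) - ((f - A f n) + (g - A g n)))
           = quad p (A (f + g) n - (A f n + A g n))"
    and "quad p ((smul c f - A (smul c f) n) - smul c (f - A f n))
           = quad p (A (smul c f) n - smul c (A f n))"
    for f g c n m
    by (simp_all only: quad_minus[OF p])
  then show ?thesis
    using A unfolding asymp_linear_def form_cauchy_def by presburger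
qed

lemma limit_form_in_M_l:
  assumes s: "nonneg_form smul s" and s': "nonneg_form smul s'"
    and t: "sesquilinear smul t" and bounded: "form_bounded s s' t"
    and A: "asymp_linear smul s A"
  shows "sesquilinear smul (limit_form t A (\<lambda>g n. g))"
    and "limit_form s A A \<in> M_l smul (limit_form t A (\<lambda>g n. g))"
proof -
  interpret bounded_limit_form smul s s' t A "\<lambda>g n. g"
    using assms by unfold_locales (simp_all add: asymp_linear_const)
  show "sesquilinear smul (limit_form t A (\<lambda>g n. g))"
    by (rule limit_form_sesquilinear)
  have "limit_form s' (\<lambda>g n. g) (\<lambda>g n. g) = s'"
    by (simp add: limit_form_def fun_eq_iff)
  then show "limit_form s A A \<in> M_l smul (limit_form t A (\<lambda>g n. g))"
    using limit_form_bounded limit_form_nonneg[OF s A] s' by (auto simp: M_l_iff)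
qed

lemma limit_form_complement_split:
  assumes "nonneg_form smul s" "nonneg_form smul s'" "sesquilinear smul t" "form_bounded s s' t"
    and "form_cauchy s (A f)"
  shows "t f g = limit_form t A (\<lambda>g n. g) f g + limit_form t (\<lambda>f n. f - A f n) (\<lambda>g n. g) f g"
proof -
  have "(\<lambda>n. t (f - A f n) g) \<longlonglongrightarrow> t f g - limit_form t A (\<lambda>g n. g) f g"
    using tendsto_diff[OF tendsto_const LIMSEQ_limit_form[where A=A and f=f and B="\<lambda>g n. g" and g=g,
          OF assms form_cauchy_const[OF assms(2)]]]
    by (simp add: sesquilinear_simps[OF assms(3)])
  then show ?thesis
    unfolding limit_form_def[of t "\<lambda>f n. f - A f n"] by (simp add: limI)
qed

lemma LIMSEQ_zero_iterated_limit:
  fixes a :: "nat \<Rightarrow> nat \<Rightarrow> 'a::real_normed_vector"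
  assumes "((\<lambda>p. a (fst p) (snd p)) \<longlongrightarrow> 0) (sequentially \<times>\<^sub>F sequentially)"
    and "\<And>m. (\<lambda>k. a k m) \<longlonglongrightarrow> L m"
  shows "L \<longlonglongrightarrow> 0"
proof (rule LIMSEQ_I)
  fix \<epsilon> :: real
  assume "\<epsilon> > 0"
  then have "\<epsilon> / 2 > 0" by simp
  then have "\<forall>\<^sub>F p in sequentially \<times>\<^sub>F sequentially. dist (a (fst p) (snd p)) 0 < \<epsilon> / 2"
    using tendsto_iff[THEN iffD1, OF assms(1)] by blast
  then obtain M where M: "\<forall>m\<ge>M. \<forall>k\<ge>M. norm (a k m) < \<epsilon> / 2"
    unfolding eventually_prod_sequentially by auto
  have "norm (L m) \<le> \<epsilon> / 2" if "m \<ge> M" for m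
    using M that by (intro LIMSEQ_le_const2[OF tendsto_norm[OF assms(2)]]) (auto intro: less_imp_le)
  then show "\<exists>M. \<forall>m\<ge>M. norm (L m - 0) < \<epsilon>"
    using \<open>\<epsilon> > 0\<close> by force
qed

lemma abs_cont_criterion:
  assumes q: "nonneg_form smul q"
    and orth: "\<And>x y B. (\<lambda>m. qf w (y m)) \<longlonglongrightarrow> 0 \<Longrightarrow> \<forall>m. quad q (y m) \<le> B
                  \<Longrightarrow> (\<lambda>m. q x (y m)) \<longlonglongrightarrow> 0"
  shows "abs_cont q w"
  unfolding abs_cont_def
proof (intro allI impI, elim conjE)
  fix fs :: "nat \<Rightarrow> 'a"
  assume w_null: "(\<lambda>n. qf w (fs n)) \<longlonglongrightarrow> 0"
    and cauchy: "\<forall>e>0. \<exists>N. \<forall>n\<ge>N. \<forall>m\<ge>N. cmod (qf q (fs n - fs m)) < e"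
  have "cmod (qf q x) = quad q x" for x
    by (simp add: qf_def nonneg_form_diag[OF q] quad_nonneg[OF q])
  then have "form_cauchy q fs"
    using cauchy by (simp add: form_cauchy_def)
  obtain B where B: "\<forall>n. snorm q (fs n) \<le> B"
    using form_cauchy_bounded[OF q \<open>form_cauchy q fs\<close>] by blast
  have "B \<ge> 0" using B snorm_nonneg[OF q] by (meson order.trans)
  have "(\<lambda>n. quad q (fs n)) \<longlonglongrightarrow> 0"
  proof (rule LIMSEQ_I)
    fix \<epsilon> :: real
    assume "\<epsilon> > 0"
    define \<delta> where "\<delta> = \<epsilon> / (B + 1)"
    have "\<delta> > 0" using \<open>\<epsilon> > 0\<close> \<open>B \<ge> 0\<close> by (simp add: \<delta>_def)
    obtain N where N: "\<forall>n\<ge>N. \<forall>m\<ge>N. snorm q (fs n - fs m) < \<delta>"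
      using form_cauchy_snorm[OF q \<open>form_cauchy q fs\<close> \<open>\<delta> > 0\<close>] by blast
    have "quad q (fs n) < \<epsilon>" if "n \<ge> N" for n
    proof -
      have "quad q (fs m) \<le> B\<^sup>2" for m
        using power_mono[OF B[rule_format, of m] snorm_nonneg[OF q], of 2]
        by (simp add: snorm_square[OF q])
      then have "(\<lambda>m. q (fs n) (fs m)) \<longlonglongrightarrow> 0"
        by (intro orth[OF w_null] allI)
      then have "quad q (fs n) \<le> snorm q (fs n) * \<delta>"
        using N that by (intro quad_le_of_tendsto_zero[OF q, of _ _ N]) (auto intro: less_imp_le)
      also have "\<dots> \<le> B * \<delta>"
        using B \<open>\<delta> > 0\<close> by (simp add: mult_right_mono)
      also have "\<dots> < \<epsilon>"
        using \<open>\<epsilon> > 0\<close> \<open>B \<ge> 0\<close> by (simp add: \<delta>_def field_simps)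
      finally show ?thesis .
    qed
    then show "\<exists>N. \<forall>n\<ge>N. norm (quad q (fs n) - 0) < \<epsilon>"
      using quad_nonneg[OF q] by auto
  qed
  then show "(\<lambda>n. qf q (fs n)) \<longlonglongrightarrow> 0"
    using tendsto_quad_zero_iff[OF q, of fs sequentially] by (simp add: qf_def)
qed

section \<open>Near-minimizers of the distance to the \<open>w\<close>-null vectors\<close>

locale form_decomposition = vector_space smul
  for smul :: "complex \<Rightarrow> 'v::ab_group_add \<Rightarrow> 'v" +
  fixes s w :: "'v \<Rightarrow> 'v \<Rightarrow> complex"
  assumes s: "nonneg_form smul s" and w: "nonneg_form smul w"
begin

definition w_ball_dist :: "real \<Rightarrow> 'v \<Rightarrow> real" where
  "w_ball_dist \<delta> f = Inf ((\<lambda>h. quad s (f - h)) ` {h. quad w h < \<delta>})"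

text \<open>The squared \<open>s\<close>-distance from \<open>f\<close> to vectors of arbitrarily small \<open>w\<close>-size;
  it will turn out to be the quadratic form of the regular part.\<close>

definition w_null_dist :: "'v \<Rightarrow> real" where
  "w_null_dist f = Sup ((\<lambda>\<delta>. w_ball_dist \<delta> f) ` {\<delta>. \<delta> > 0})"

lemma w_ball_dist_le: "quad w h < \<delta> \<Longrightarrow> w_ball_dist \<delta> f \<le> quad s (f - h)"
  unfolding w_ball_dist_def
  by (rule cInf_lower) (auto intro!: bdd_belowI[where m=0] quad_nonneg[OF s])

lemma w_ball_dist_le_quad: "\<delta> > 0 \<Longrightarrow> w_ball_dist \<delta> f \<le> quad s f"
  using w_ball_dist_le[of 0 \<delta> f] by (simp add: quad_zero[OF w])

lemma bdd_above_w_ball_dist: "bdd_above ((\<lambda>\<delta>. w_ball_dist \<delta> f) ` {\<delta>. \<delta> > 0})"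
  by (auto intro!: bdd_aboveI[where M="quad s f"] w_ball_dist_le_quad)

lemma w_ball_dist_le_null_dist: "\<delta> > 0 \<Longrightarrow> w_ball_dist \<delta> f \<le> w_null_dist f"
  unfolding w_null_dist_def by (rule cSup_upper) (auto intro: bdd_above_w_ball_dist)

lemma w_null_dist_lower:
  assumes "\<eta> > 0"
  shows "\<exists>\<delta>>0. \<forall>h. quad w h < \<delta> \<longrightarrow> w_null_dist f - \<eta> < quad s (f - h)"
proof -
  have "w_null_dist f - \<eta> < Sup ((\<lambda>\<delta>. w_ball_dist \<delta> f) ` {\<delta>. \<delta> > 0})"
    using assms by (simp add: w_null_dist_def)
  then obtain \<delta> where "\<delta> > 0" "w_null_dist f - \<eta> < w_ball_dist \<delta> f"
    by (subst (asm) less_cSup_iff) (auto intro: bdd_above_w_ball_dist exI[of _ 1])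
  then show ?thesis
    using w_ball_dist_le by (meson less_le_trans)
qed

lemma near_minimizer_exists:
  assumes "\<epsilon> > 0"
  shows "\<exists>h. quad w h < \<epsilon> \<and> quad s (f - h) < w_null_dist f + \<epsilon>"
proof -
  have "Inf ((\<lambda>h. quad s (f - h)) ` {h. quad w h < \<epsilon>}) < w_ball_dist \<epsilon> f + \<epsilon>"
    using assms by (simp add: w_ball_dist_def)
  then obtain h where "quad w h < \<epsilon>" "quad s (f - h) < w_ball_dist \<epsilon> f + \<epsilon>"
    by (subst (asm) cInf_less_iff)
      (auto intro!: bdd_belowI[where m=0] quad_nonneg[OF s] exI[of _ 0] simp: quad_zero[OF w] assms)
  then show ?thesis
    using w_ball_dist_le_null_dist[OF assms, of f] by force
qed

definition minimizing :: "'a filter \<Rightarrow> 'v \<Rightarrow> ('a \<Rightarrow> 'v) \<Rightarrow> bool" where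
  "minimizing F f h \<longleftrightarrow> ((\<lambda>i. quad w (h i)) \<longlongrightarrow> 0) F \<and> ((\<lambda>i. quad s (f - h i)) \<longlongrightarrow> w_null_dist f) F"

lemma minimizing_compose:
  "minimizing G f h \<Longrightarrow> filterlim r G F \<Longrightarrow> minimizing F f (\<lambda>i. h (r i))"
  unfolding minimizing_def by (auto intro: filterlim_compose)

text \<open>The variational inequality of the minimization: perturbing a near-minimizer \<open>h\<close>
  by a \<open>w\<close>-small multiple of \<open>u\<close> cannot decrease \<open>s[f - h]\<close> below \<open>w_null_dist f\<close>.\<close>

theorem minimizing_orthogonal:
  assumes h: "minimizing F f h" and u: "((\<lambda>i. quad w (u i)) \<longlongrightarrow> 0) F"
    and bounded: "\<forall>i. quad s (u i) \<le> B"
  shows "((\<lambda>i. s (f - h i) (u i)) \<longlongrightarrow> 0) F"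
  unfolding tendsto_iff
proof (intro allI impI)
  fix \<epsilon> :: real
  assume "\<epsilon> > 0"
  have "B \<ge> 0" using bounded quad_nonneg[OF s] by (meson order.trans)
  define \<tau> where "\<tau> = \<epsilon> / (B + 1)"
  define \<eta> where "\<eta> = \<tau> * \<epsilon> / 2"
  have "\<tau> > 0" "\<eta> > 0" "\<tau> * B < \<epsilon>"
    using \<open>\<epsilon> > 0\<close> \<open>B \<ge> 0\<close> by (simp_all add: \<tau>_def \<eta>_def field_simps)
  obtain \<delta> where "\<delta> > 0" and \<delta>: "\<And>v. quad w v < \<delta> \<Longrightarrow> w_null_dist f - \<eta> < quad s (f - v)"
    using w_null_dist_lower[OF \<open>\<eta> > 0\<close>] by blast
  have "((\<lambda>i. 2 * quad w (h i) + 2 * \<tau>\<^sup>2 * quad w (u i)) \<longlongrightarrow> 0) F"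
    using h u unfolding minimizing_def by (auto intro: tendsto_add_zero tendsto_mult_right_zero)
  then have "\<forall>\<^sub>F i in F. 2 * quad w (h i) + 2 * \<tau>\<^sup>2 * quad w (u i) < \<delta>"
    using \<open>\<delta> > 0\<close> by (rule order_tendstoD)
  moreover have "\<forall>\<^sub>F i in F. quad s (f - h i) < w_null_dist f + \<eta>"
    using h \<open>\<eta> > 0\<close> unfolding minimizing_def by (intro order_tendstoD) auto
  ultimately show "\<forall>\<^sub>F i in F. dist (s (f - h i) (u i)) 0 < \<epsilon>"
  proof eventually_elim
    case (elim i)
    define \<alpha> where "\<alpha> = complex_of_real \<tau> * sgn (s (f - h i) (u i))"
    have "(cmod \<alpha>)\<^sup>2 \<le> \<tau>\<^sup>2"
      using \<open>\<tau> > 0\<close> by (intro power_mono) (auto simp: \<alpha>_def norm_mult norm_sgn)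
    then have "quad w (h i + smul \<alpha> (u i)) < \<delta>"
      using quad_add_le[OF w, of "h i" "smul \<alpha> (u i)"] elim(1) quad_nonneg[OF w, of "u i"]
        mult_right_mono[of "(cmod \<alpha>)\<^sup>2" "\<tau>\<^sup>2" "quad w (u i)"]
      by (simp add: quad_scale[OF w])
    then have "w_null_dist f - \<eta> < quad s ((f - h i) - smul \<alpha> (u i))"
      using \<delta> by (simp add: diff_diff_eq)
    then have "cmod (s (f - h i) (u i)) < \<eta> / \<tau> + \<tau> * B / 2"
      unfolding \<alpha>_def using bounded elim(2) by (intro cross_term_small[OF s \<open>\<tau> > 0\<close>]) auto
    then show ?case
      using \<open>\<tau> > 0\<close> \<open>\<tau> * B < \<epsilon>\<close> by (simp add: \<eta>_def)
  qed
qed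

definition sing_approx :: "'v \<Rightarrow> nat \<Rightarrow> 'v" where
  "sing_approx f k = (SOME h. quad w h < inverse (Suc k) \<and>
                              quad s (f - h) < w_null_dist f + inverse (Suc k))"

lemma sing_approx:
  "quad w (sing_approx f k) < inverse (Suc k)"
  "quad s (f - sing_approx f k) < w_null_dist f + inverse (Suc k)"
  using someI_ex[OF near_minimizer_exists[of "inverse (Suc k)" f]]
  by (simp_all add: sing_approx_def)

lemma minimizing_sing_approx: "minimizing sequentially f (sing_approx f)"
  unfolding minimizing_def
proof
  show w_null: "(\<lambda>k. quad w (sing_approx f k)) \<longlonglongrightarrow> 0"
    by (rule tendsto_sandwich[OF always_eventually always_eventually
          tendsto_const LIMSEQ_inverse_real_of_nat])
      (rule allI quad_nonneg[OF w] less_imp_le[OF sing_approx(1)])+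
  show "(\<lambda>k. quad s (f - sing_approx f k)) \<longlonglongrightarrow> w_null_dist f"
  proof (rule order_tendstoI)
    fix a
    assume "a < w_null_dist f"
    then obtain \<delta> where "\<delta> > 0"
      and \<delta>: "\<forall>h. quad w h < \<delta> \<longrightarrow> w_null_dist f - (w_null_dist f - a) < quad s (f - h)"
      using w_null_dist_lower[of "w_null_dist f - a" f] by auto
    show "\<forall>\<^sub>F k in sequentially. a < quad s (f - sing_approx f k)"
      using order_tendstoD(2)[OF w_null \<open>\<delta> > 0\<close>] by eventually_elim (use \<delta> in auto)
  next
    fix a
    assume "w_null_dist f < a"
    moreover have "(\<lambda>k. w_null_dist f + inverse (Suc k)) \<longlonglongrightarrow> w_null_dist f"
      using tendsto_add[OF tendsto_const LIMSEQ_inverse_real_of_nat] by simp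
    ultimately have "\<forall>\<^sub>F k in sequentially. w_null_dist f + inverse (Suc k) < a"
      by (rule order_tendstoD(2)[rotated])
    then show "\<forall>\<^sub>F k in sequentially. quad s (f - sing_approx f k) < a"
      by eventually_elim (use sing_approx(2) in \<open>auto intro: less_trans\<close>)
  qed
qed

lemma sing_approx_bounded: "\<exists>C. \<forall>k. quad s (sing_approx f k) \<le> C"
proof -
  have "quad s (sing_approx f k) \<le> 2 * quad s f + 2 * (w_null_dist f + 1)" for k
  proof -
    have "quad s (sing_approx f k) \<le> 2 * quad s f + 2 * quad s (f - sing_approx f k)"
      using quad_diff_le[OF s, of f "f - sing_approx f k"] by simp
    moreover have "inverse (real (Suc k)) \<le> 1"
      by (simp add: inverse_le_1_iff)
    then have "quad s (f - sing_approx f k) < w_null_dist f + 1"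
      by (rule less_le_trans[OF sing_approx(2) add_left_mono])
    ultimately show ?thesis by (simp add: algebra_simps)
  qed
  then show ?thesis by blast
qed

lemma sing_approx_orthogonal:
  assumes "filterlim r sequentially F"
    and "((\<lambda>i. quad w (u i)) \<longlongrightarrow> 0) F" and "\<forall>i. quad s (u i) \<le> B"
  shows "((\<lambda>i. s (f - sing_approx f (r i)) (u i)) \<longlongrightarrow> 0) F"
  by (rule minimizing_orthogonal[OF minimizing_compose[OF minimizing_sing_approx assms(1)] assms(2,3)])

lemma sing_approx_cauchy: "form_cauchy s (sing_approx f)"
proof -
  let ?F = "sequentially \<times>\<^sub>F sequentially"
  define u where "u p = sing_approx f (fst p) - sing_approx f (snd p)" for p
  have approx_null: "((\<lambda>p. quad w (sing_approx f (r p))) \<longlongrightarrow> 0) ?F"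
    if "filterlim r sequentially ?F" for r
    using minimizing_compose[OF minimizing_sing_approx that] by (simp add: minimizing_def)
  have null: "((\<lambda>p. quad w (u p)) \<longlongrightarrow> 0) ?F"
    unfolding u_def
    by (rule tendsto_quad_zero_diff[OF w approx_null[OF filterlim_fst] approx_null[OF filterlim_snd]])
  obtain C where C: "\<forall>k. quad s (sing_approx f k) \<le> C"
    using sing_approx_bounded by blast
  have bounded: "\<forall>p. quad s (u p) \<le> 4 * C"
  proof
    fix p
    show "quad s (u p) \<le> 4 * C"
      using quad_diff_le[OF s, of "sing_approx f (fst p)" "sing_approx f (snd p)"]
        C[rule_format, of "fst p"] C[rule_format, of "snd p"] unfolding u_def by linarith
  qed
  have "u p = (f - sing_approx f (snd p)) - (f - sing_approx f (fst p))" for p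
    by (simp add: u_def)
  then have "s (u p) (u p) = s (f - sing_approx f (snd p)) (u p) - s (f - sing_approx f (fst p)) (u p)" for p
    by (metis sesquilinear_simps(9)[OF nonneg_form_sesquilinear[OF s]])
  then have "((\<lambda>p. s (u p) (u p)) \<longlongrightarrow> 0) ?F"
    using tendsto_diff[OF sing_approx_orthogonal[OF filterlim_snd null bounded]
        sing_approx_orthogonal[OF filterlim_fst null bounded]] by simp
  then have "\<forall>\<^sub>F p in ?F. dist (quad s (u p)) 0 < \<epsilon>" if "\<epsilon> > 0" for \<epsilon>
    using that tendsto_quad_zero_iff[OF s] by (auto simp: tendsto_iff)
  then show ?thesis
    unfolding form_cauchy_def eventually_prod_sequentially u_def by fastforce
qed

lemma sing_approx_add:
  "(\<lambda>n. quad s (sing_approx (f + g) n - (sing_approx f n + sing_approx g n))) \<longlonglongrightarrow> 0"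
proof -
  define u where "u n = sing_approx (f + g) n - (sing_approx f n + sing_approx g n)" for n
  have null: "(\<lambda>n. quad w (u n)) \<longlonglongrightarrow> 0"
    using minimizing_sing_approx unfolding u_def minimizing_def
    by (intro tendsto_quad_zero_diff[OF w] tendsto_quad_zero_add[OF w]) auto
  obtain C1 C2 C3 where C: "\<forall>k. quad s (sing_approx (f + g) k) \<le> C1"
    "\<forall>k. quad s (sing_approx f k) \<le> C2" "\<forall>k. quad s (sing_approx g k) \<le> C3"
    using sing_approx_bounded by metis
  have bounded: "\<forall>n. quad s (u n) \<le> 2 * C1 + 4 * C2 + 4 * C3"
  proof
    fix n
    show "quad s (u n) \<le> 2 * C1 + 4 * C2 + 4 * C3"
      using quad_diff_le[OF s, of "sing_approx (f + g) n" "sing_approx f n + sing_approx g n"]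
        quad_add_le[OF s, of "sing_approx f n" "sing_approx g n"] C[THEN spec, of n]
      unfolding u_def by linarith
  qed
  have orth: "(\<lambda>n. s (h - sing_approx h n) (u n)) \<longlonglongrightarrow> 0" for h
    using sing_approx_orthogonal[OF filterlim_ident null bounded] by simp
  have "s (u n) (u n) = s (f - sing_approx f n) (u n) + s (g - sing_approx g n) (u n)
                                   - s ((f + g) - sing_approx (f + g) n) (u n)" for n
  proof -
    have "u n = (f - sing_approx f n) + (g - sing_approx g n) - ((f + g) - sing_approx (f + g) n)"
      by (simp add: u_def algebra_simps)
    then have "s (u n) (u n)
        = s ((f - sing_approx f n) + (g - sing_approx g n) - ((f + g) - sing_approx (f + g) n)) (u n)"
      by (rule arg_cong[where f="\<lambda>x. s x (u n)"])
    then show ?thesis by (simp add: sesquilinear_simps[OF nonneg_form_sesquilinear[OF s]])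
  qed
  then have "(\<lambda>n. s (u n) (u n)) \<longlonglongrightarrow> 0"
    using tendsto_diff[OF tendsto_add[OF orth orth] orth] by simp
  then have "(\<lambda>n. quad s (u n)) \<longlonglongrightarrow> 0"
    using tendsto_quad_zero_iff[OF s] by blast
  then show ?thesis by (simp add: u_def)
qed

lemma sing_approx_scale:
  "(\<lambda>n. quad s (sing_approx (smul c f) n - smul c (sing_approx f n))) \<longlonglongrightarrow> 0"
proof -
  define u where "u n = sing_approx (smul c f) n - smul c (sing_approx f n)" for n
  have null: "(\<lambda>n. quad w (u n)) \<longlonglongrightarrow> 0"
    using minimizing_sing_approx unfolding u_def minimizing_def
    by (intro tendsto_quad_zero_diff[OF w] tendsto_quad_zero_scale[OF w]) auto
  obtain C1 C2 where C: "\<forall>k. quad s (sing_approx (smul c f) k) \<le> C1"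
    "\<forall>k. quad s (sing_approx f k) \<le> C2"
    using sing_approx_bounded by metis
  have bounded: "\<forall>n. quad s (u n) \<le> 2 * C1 + 2 * ((cmod c)\<^sup>2 * C2)"
  proof
    fix n
    have "quad s (smul c (sing_approx f n)) \<le> (cmod c)\<^sup>2 * C2"
      using C(2) by (simp add: quad_scale[OF s] mult_left_mono)
    then show "quad s (u n) \<le> 2 * C1 + 2 * ((cmod c)\<^sup>2 * C2)"
      using quad_diff_le[OF s, of "sing_approx (smul c f) n" "smul c (sing_approx f n)"]
        C(1)[rule_format, of n] unfolding u_def by linarith
  qed
  have orth: "(\<lambda>n. s (h - sing_approx h n) (u n)) \<longlonglongrightarrow> 0" for h
    using sing_approx_orthogonal[OF filterlim_ident null bounded] by simp
  have "s (u n) (u n) = c * s (f - sing_approx f n) (u n)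
                                   - s (smul c f - sing_approx (smul c f) n) (u n)" for n
  proof -
    have "u n = smul c (f - sing_approx f n) - (smul c f - sing_approx (smul c f) n)"
      by (simp add: u_def scale_right_diff_distrib)
    then have "s (u n) (u n) = s (smul c (f - sing_approx f n) - (smul c f - sing_approx (smul c f) n)) (u n)"
      by (rule arg_cong[where f="\<lambda>x. s x (u n)"])
    then show ?thesis by (simp add: sesquilinear_simps[OF nonneg_form_sesquilinear[OF s]])
  qed
  then have "(\<lambda>n. s (u n) (u n)) \<longlonglongrightarrow> 0"
    using tendsto_diff[OF tendsto_mult_right_zero[OF orth] orth] by simp
  then have "(\<lambda>n. quad s (u n)) \<longlonglongrightarrow> 0"
    using tendsto_quad_zero_iff[OF s] by blast
  then show ?thesis by (simp add: u_def)
qed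

lemma asymp_linear_sing_approx: "asymp_linear smul s sing_approx"
  by (simp add: asymp_linear_def sing_approx_cauchy sing_approx_add sing_approx_scale)

section \<open>The regular and the singular part\<close>

definition sing_part :: "'v \<Rightarrow> 'v \<Rightarrow> complex" where
  "sing_part = limit_form s sing_approx sing_approx"

definition reg_part :: "'v \<Rightarrow> 'v \<Rightarrow> complex" where
  "reg_part = limit_form s (\<lambda>f n. f - sing_approx f n) (\<lambda>f n. f - sing_approx f n)"

lemma asymp_linear_reg_approx: "asymp_linear smul s (\<lambda>f n. f - sing_approx f n)"
  by (rule asymp_linear_complement[OF vector_space_axioms s asymp_linear_sing_approx])

lemma sing_part_nonneg: "nonneg_form smul sing_part"
  unfolding sing_part_def by (rule limit_form_nonneg[OF s asymp_linear_sing_approx])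

lemma reg_part_nonneg: "nonneg_form smul reg_part"
  unfolding reg_part_def by (rule limit_form_nonneg[OF s asymp_linear_reg_approx])

lemma quad_reg_part: "quad reg_part f = w_null_dist f"
  using LIMSEQ_quad_limit_form[where A="\<lambda>f n. f - sing_approx f n" and f=f,
      OF s asymp_linear_cauchy[OF asymp_linear_reg_approx]] minimizing_sing_approx
  unfolding reg_part_def minimizing_def by (blast intro: LIMSEQ_unique)

lemma reg_part_tendsto_zero:
  assumes null: "(\<lambda>m. quad w (y m)) \<longlonglongrightarrow> 0" and bounded: "\<forall>m. w_null_dist (y m) \<le> B"
  shows "(\<lambda>m. reg_part x (y m)) \<longlonglongrightarrow> 0"
proof -
  let ?F = "sequentially \<times>\<^sub>F sequentially"
  define u where "u p = y (snd p) - sing_approx (y (snd p)) (fst p)" for p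
  have "((\<lambda>p. quad w (y (snd p))) \<longlongrightarrow> 0) ?F"
    using filterlim_compose[OF null filterlim_snd] .
  moreover have "((\<lambda>p. quad w (sing_approx (y (snd p)) (fst p))) \<longlongrightarrow> 0) ?F"
    by (rule tendsto_sandwich[OF always_eventually always_eventually tendsto_const
          filterlim_compose[OF LIMSEQ_inverse_real_of_nat filterlim_fst]])
      (rule allI quad_nonneg[OF w] less_imp_le[OF sing_approx(1)])+
  ultimately have u_null: "((\<lambda>p. quad w (u p)) \<longlongrightarrow> 0) ?F"
    unfolding u_def by (rule tendsto_quad_zero_diff[OF w])
  have "quad s (u p) \<le> B + 1" for p
  proof -
    have "inverse (real (Suc (fst p))) \<le> 1"
      by (simp add: inverse_le_1_iff)
    then have "quad s (u p) < w_null_dist (y (snd p)) + 1"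
      unfolding u_def by (rule less_le_trans[OF sing_approx(2) add_left_mono])
    then show ?thesis
      using bounded[rule_format, of "snd p"] by linarith
  qed
  then have "((\<lambda>p. s (x - sing_approx x (fst p)) (u p)) \<longlongrightarrow> 0) ?F"
    by (intro sing_approx_orthogonal[OF filterlim_fst u_null] allI)
  moreover have "(\<lambda>k. s (x - sing_approx x k) (y m - sing_approx (y m) k)) \<longlonglongrightarrow> reg_part x (y m)" for m
    unfolding reg_part_def
    by (intro LIMSEQ_limit_form[OF s s nonneg_form_sesquilinear[OF s] nonneg_form_bounded[OF s]])
      (rule asymp_linear_cauchy[OF asymp_linear_reg_approx])+
  ultimately show ?thesis
    unfolding u_def by (rule LIMSEQ_zero_iterated_limit)
qed

theorem abs_cont_reg_part: "abs_cont reg_part w"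
proof (rule abs_cont_criterion[OF reg_part_nonneg])
  fix x B and y :: "nat \<Rightarrow> 'v"
  assume "(\<lambda>m. qf w (y m)) \<longlonglongrightarrow> 0" and "\<forall>m. quad reg_part (y m) \<le> B"
  then have "(\<lambda>m. quad w (y m)) \<longlonglongrightarrow> 0" and "\<forall>m. w_null_dist (y m) \<le> B"
    using tendsto_Re by (fastforce simp: quad_def, simp add: quad_reg_part)
  then show "(\<lambda>m. reg_part x (y m)) \<longlonglongrightarrow> 0"
    by (rule reg_part_tendsto_zero)
qed

lemma sing_approx_diff_orthogonal:
  "(\<lambda>n. s (sing_approx f n - sing_approx g n) (sing_approx g n - g)) \<longlonglongrightarrow> 0"
proof -
  define p where "p n = sing_approx f n - sing_approx g n" for n
  have p_null: "(\<lambda>n. quad w (p n)) \<longlonglongrightarrow> 0"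
    using minimizing_sing_approx unfolding p_def minimizing_def
    by (intro tendsto_quad_zero_diff[OF w]) auto
  obtain C1 C2 where "\<forall>k. quad s (sing_approx f k) \<le> C1" "\<forall>k. quad s (sing_approx g k) \<le> C2"
    using sing_approx_bounded by metis
  then have "\<forall>n. quad s (p n) \<le> 2 * C1 + 2 * C2"
    using quad_diff_le[OF s] unfolding p_def by (meson add_mono mult_left_mono order.trans zero_le_numeral)
  then have "(\<lambda>n. s (g - sing_approx g n) (p n)) \<longlonglongrightarrow> 0"
    using sing_approx_orthogonal[OF filterlim_ident p_null] by simp
  moreover have "s (p n) (sing_approx g n - g) = - cnj (s (g - sing_approx g n) (p n))" for n
  proof -
    have "s (sing_approx g n - g) (p n) = - s (g - sing_approx g n) (p n)"
      by (metis minus_diff_eq sesquilinear_simps(7)[OF nonneg_form_sesquilinear[OF s]])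
    then show ?thesis
      using nonneg_form_hermitian[OF s, of "p n" "sing_approx g n - g"] by simp
  qed
  ultimately show ?thesis
    using tendsto_minus[OF tendsto_cnj] unfolding p_def by fastforce
qed

lemma quad_sing_part_diff_le:
  assumes "\<forall>n\<ge>M. quad s (sing_approx f n - g) \<le> \<epsilon>"
  shows "quad sing_part (f - g) \<le> \<epsilon>"
proof -
  define p where "p n = sing_approx f n - sing_approx g n" for n
  define q where "q n = sing_approx g n - g" for n
  have "(\<lambda>n. quad s (p n)) \<longlonglongrightarrow> quad sing_part (f - g)"
    unfolding p_def sing_part_def by (rule LIMSEQ_quad_limit_form_diff[OF s asymp_linear_sing_approx])
  moreover have "(\<lambda>n. s (p n) (q n)) \<longlonglongrightarrow> 0"
    unfolding p_def q_def by (rule sing_approx_diff_orthogonal)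
  moreover have "quad s (p n) \<le> quad s (sing_approx f n - g) + 2 * cmod (s (p n) (q n))" for n
  proof -
    have "p n + q n = sing_approx f n - g" by (simp add: p_def q_def)
    then have "quad s (sing_approx f n - g) = quad s (p n) + 2 * Re (s (p n) (q n)) + quad s (q n)"
      using quad_add[OF s, of "p n" "q n"] by simp
    then show ?thesis
      using abs_Re_le_cmod[of "s (p n) (q n)"] quad_nonneg[OF s, of "q n"] by linarith
  qed
  then have "\<forall>\<^sub>F n in sequentially. quad s (p n) \<le> \<epsilon> + 2 * cmod (s (p n) (q n))"
    using assms unfolding eventually_sequentially by (meson add_right_mono order.trans)
  ultimately show ?thesis
    using tendsto_le[OF sequentially_bot tendsto_add[OF tendsto_const
          tendsto_mult_right_zero[OF tendsto_norm_zero]]] by fastforce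
qed

theorem singular_sing_part: "singular_form sing_part w"
  unfolding singular_form_def
proof
  fix f
  have "(\<lambda>n. qf w (sing_approx f n)) \<longlonglongrightarrow> 0"
    using minimizing_sing_approx tendsto_quad_zero_iff[OF w, of "sing_approx f"]
    unfolding minimizing_def qf_def by blast
  moreover have "(\<lambda>m. quad sing_part (f - sing_approx f m)) \<longlonglongrightarrow> 0"
  proof (rule LIMSEQ_I)
    fix \<epsilon> :: real
    assume "\<epsilon> > 0"
    then obtain M where "\<forall>n\<ge>M. \<forall>m\<ge>M. quad s (sing_approx f n - sing_approx f m) < \<epsilon> / 2"
      using sing_approx_cauchy unfolding form_cauchy_def by (meson half_gt_zero)
    then have "quad sing_part (f - sing_approx f m) \<le> \<epsilon> / 2" if "m \<ge> M" for m
      using that by (intro quad_sing_part_diff_le[of M]) (simp add: less_imp_le)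
    then show "\<exists>M. \<forall>m\<ge>M. norm (quad sing_part (f - sing_approx f m) - 0) < \<epsilon>"
      using \<open>\<epsilon> > 0\<close> quad_nonneg[OF sing_part_nonneg] by force
  qed
  then have "(\<lambda>m. qf sing_part (f - sing_approx f m)) \<longlonglongrightarrow> 0"
    using tendsto_quad_zero_iff[OF sing_part_nonneg, of "\<lambda>m. f - sing_approx f m"]
    unfolding qf_def by blast
  ultimately show "\<exists>fs. (\<lambda>n. qf w (fs n)) \<longlonglongrightarrow> 0 \<and> (\<lambda>n. qf sing_part (f - fs n)) \<longlonglongrightarrow> 0"
    by blast
qed

end

theorem mainTheorem1:
  fixes smul :: "complex \<Rightarrow> 'v::ab_group_add \<Rightarrow> 'v"
    and t w :: "'v \<Rightarrow> 'v \<Rightarrow> complex"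
  assumes "vector_space smul"
    and "sesquilinear smul t" and "nonneg_form smul w" and "M_l smul t \<noteq> {}"
  shows "\<exists>tlr tls. sesquilinear smul tlr \<and> sesquilinear smul tls \<and>
           left_regular smul tlr w \<and> left_strongly_singular smul tls w \<and>
           (\<forall>f g. t f g = tlr f g + tls f g)"
proof -
  obtain s s' where s: "nonneg_form smul s" and s': "nonneg_form smul s'"
    and bounded: "form_bounded s s' t"
    using assms(4) by (auto simp: M_l_iff)
  interpret form_decomposition smul s w
    using assms(1,3) s by (simp add: form_decomposition_def form_decomposition_axioms_def)
  note reg = limit_form_in_M_l[OF s s' assms(2) bounded asymp_linear_reg_approx]
  note sing = limit_form_in_M_l[OF s s' assms(2) bounded asymp_linear_sing_approx]
  show ?thesis
  proof (intro exI conjI allI)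
    show "left_regular smul (limit_form t (\<lambda>f n. f - sing_approx f n) (\<lambda>g n. g)) w"
      using reg(2) abs_cont_reg_part unfolding left_regular_def reg_part_def by blast
    show "left_strongly_singular smul (limit_form t sing_approx (\<lambda>g n. g)) w"
      using sing(2) singular_sing_part unfolding left_strongly_singular_def sing_part_def by blast
    show "t f g = limit_form t (\<lambda>f n. f - sing_approx f n) (\<lambda>g n. g) f g
                  + limit_form t sing_approx (\<lambda>g n. g) f g" for f g
      using limit_form_complement_split[where A=sing_approx and f=f and g=g,
          OF s s' assms(2) bounded sing_approx_cauchy] by (simp add: ac_simps)
  qed (fact reg(1) sing(1))+
qed

end
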